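(* Let $P$ be a rooted forest on $[n]$ with natural labeling. For $1\le i\le n$ let $G_i$ be the $\mathcal{L}(P)\times\mathcal{L}(P)$ $0$-$1$ matrix with $G_i(\pi',\pi)=1$ if and only if $\pi'=\pi\partial_{\pi^{-1}_i}$. Then the monoid $\mathcal{M}$ generated by $G_1,\dots,G_n$ under matrix multiplication is $\mathcal{R}$-trivial.
   Context: A rooted forest is a disjoint union of rooted trees, a rooted tree being a connected finite poset in which each element is covered by at most one element. $\mathcal{L}(P)=\{\pi\in S_n : i\prec j \Rightarrow \pi^{-1}_i<\pi^{-1}_j\}$ in one-line notation. $\pi\tau_i$ ($1\le i<n$) swaps $\pi_i,\pi_{i+1}$ if they are incomparable in $P$ and is $\pi$ otherwise; operators act on the right; $\partial_j=\tau_j\tau_{j+1}\cdots\tau_{n-1}$. (Equivalently $G_i$ is $\overline{M}=M+(x_1+\cdots+x_n)\mathbb{1}$ evaluated at $x_i=1$, $x_j=0$ for $j\ne i$, where $M$ is the promotion graph transition matrix.) A finite monoid $\mathcal{M}$ (with identity) is $\mathcal{R}$-trivial if $x\mathcal{M}=y\mathcal{M}$ implies $x=y$ for all $x,y\in\mathcal{M}$. *)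

theory Defs
  imports Main
begin

definition strict_poset_on :: "nat \<Rightarrow> (nat \<Rightarrow> nat \<Rightarrow> bool) \<Rightarrow> bool" where
  "strict_poset_on n lt \<longleftrightarrow>
     (\<forall>x y. lt x y \<longrightarrow> x \<in> {1..n} \<and> y \<in> {1..n}) \<and>
     (\<forall>x. \<not> lt x x) \<and>
     (\<forall>x y z. lt x y \<longrightarrow> lt y z \<longrightarrow> lt x z)"

definition covers :: "(nat \<Rightarrow> nat \<Rightarrow> bool) \<Rightarrow> nat \<Rightarrow> nat \<Rightarrow> bool" where
  "covers lt x y \<longleftrightarrow> lt x y \<and> \<not> (\<exists>z. lt x z \<and> lt z y)"

(* rooted forest: disjoint union of rooted trees, i.e. a finite poset in which
   every element is covered by at most one element *)
definition rooted_forest :: "nat \<Rightarrow> (nat \<Rightarrow> nat \<Rightarrow> bool) \<Rightarrow> bool" where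
  "rooted_forest n lt \<longleftrightarrow> strict_poset_on n lt \<and>
     (\<forall>x y z. covers lt x y \<longrightarrow> covers lt x z \<longrightarrow> y = z)"

definition natural_labeling :: "(nat \<Rightarrow> nat \<Rightarrow> bool) \<Rightarrow> bool" where
  "natural_labeling lt \<longleftrightarrow> (\<forall>i j. lt i j \<longrightarrow> i < j)"

(* permutations of [n] in one-line notation: pi = [pi_1, ..., pi_n],
   pi_k = pi ! (k - 1) *)
definition is_perm :: "nat \<Rightarrow> nat list \<Rightarrow> bool" where
  "is_perm n \<pi> \<longleftrightarrow> distinct \<pi> \<and> set \<pi> = {1..n}"

(* pi^{-1}_i : the (1-based) position of i in pi *)
definition pinv :: "nat list \<Rightarrow> nat \<Rightarrow> nat" where
  "pinv \<pi> i = Suc (LEAST k. k < length \<pi> \<and> \<pi> ! k = i)"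

definition linext :: "nat \<Rightarrow> (nat \<Rightarrow> nat \<Rightarrow> bool) \<Rightarrow> nat list set" where
  "linext n lt = {\<pi>. is_perm n \<pi> \<and> (\<forall>i j. lt i j \<longrightarrow> pinv \<pi> i < pinv \<pi> j)}"

(* pi tau_i : swap pi_i, pi_{i+1} if incomparable in P *)
definition tau :: "(nat \<Rightarrow> nat \<Rightarrow> bool) \<Rightarrow> nat list \<Rightarrow> nat \<Rightarrow> nat list" where
  "tau lt \<pi> i =
     (let a = \<pi> ! (i - 1); b = \<pi> ! i in
      if \<not> lt a b \<and> \<not> lt b a then \<pi>[i - 1 := b, i := a] else \<pi>)"

(* pi partial_j = pi tau_j tau_{j+1} ... tau_{n-1} (operators act on the right) *)
definition bdry :: "nat \<Rightarrow> (nat \<Rightarrow> nat \<Rightarrow> bool) \<Rightarrow> nat list \<Rightarrow> nat \<Rightarrow> nat list" where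
  "bdry n lt \<pi> j = fold (\<lambda>k \<sigma>. tau lt \<sigma> k) [j..<n] \<pi>"

(* L(P) x L(P) matrices, represented as functions (row, column) \<Rightarrow> entry,
   which are zero outside L(P) x L(P) *)
type_synonym mat = "nat list \<Rightarrow> nat list \<Rightarrow> nat"

definition G :: "nat \<Rightarrow> (nat \<Rightarrow> nat \<Rightarrow> bool) \<Rightarrow> nat \<Rightarrow> mat" where
  "G n lt i = (\<lambda>\<pi>' \<pi>. if \<pi>' \<in> linext n lt \<and> \<pi> \<in> linext n lt \<and> \<pi>' = bdry n lt \<pi> (pinv \<pi> i)
                      then 1 else 0)"

definition idm :: "nat \<Rightarrow> (nat \<Rightarrow> nat \<Rightarrow> bool) \<Rightarrow> mat" where
  "idm n lt = (\<lambda>\<pi>' \<pi>. if \<pi> \<in> linext n lt \<and> \<pi>' = \<pi> then 1 else 0)"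

definition mmul :: "nat \<Rightarrow> (nat \<Rightarrow> nat \<Rightarrow> bool) \<Rightarrow> mat \<Rightarrow> mat \<Rightarrow> mat" where
  "mmul n lt A B = (\<lambda>\<pi>' \<pi>. \<Sum>\<sigma>\<in>linext n lt. A \<pi>' \<sigma> * B \<sigma> \<pi>)"

inductive_set gen_monoid :: "nat \<Rightarrow> (nat \<Rightarrow> nat \<Rightarrow> bool) \<Rightarrow> mat set"
  for n lt where
  one: "idm n lt \<in> gen_monoid n lt"
| gen: "i \<in> {1..n} \<Longrightarrow> G n lt i \<in> gen_monoid n lt"
| mult: "A \<in> gen_monoid n lt \<Longrightarrow> B \<in> gen_monoid n lt \<Longrightarrow> mmul n lt A B \<in> gen_monoid n lt"

definition R_trivial :: "'a set \<Rightarrow> ('a \<Rightarrow> 'a \<Rightarrow> 'a) \<Rightarrow> bool" where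
  "R_trivial M mult \<longleftrightarrow>
     (\<forall>x\<in>M. \<forall>y\<in>M. (mult x ` M) = (mult y ` M) \<longrightarrow> x = y)"

end

theory Submission
  imports Defs
begin

text \<open>
  Every element of the monoid is the matrix of a word in the letters \<open>1..n\<close>, acting on linear
  extensions by successive promotions. If \<open>x\<M> = y\<M>\<close>, then \<open>x = y c\<close> and \<open>y = x d\<close> for words
  \<open>c, d\<close>; hence \<open>x\<close> is stable under \<open>w = d c\<close>, and it suffices that a high power of \<open>w\<close> absorbs
  \<open>d\<close>. Promoting \<open>g\<close> only changes the relative order of pairs meeting the chain above \<open>g\<close>
  (a chain because \<open>P\<close> is a forest), and the new position of an element \<open>x\<close> of that chain
  relative to \<open>z\<close> is the old position of the parent of \<open>x\<close>. Parents have larger labels, so if two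
  linear extensions agree on all pairs that \<open>w\<close> cannot move and on all pairs of weight
  \<open>(n - x) + (n - z) < k\<close>, then after one pass of \<open>w\<close> they agree on all pairs of weight \<open>\<le> k\<close>.
  After \<open>2n\<close> passes they coincide.
\<close>

section \<open>Relative order in lists\<close>

fun precedes :: "'a list \<Rightarrow> 'a \<Rightarrow> 'a \<Rightarrow> bool" where
  "precedes [] x z = False"
| "precedes (y # ys) x z = ((y = x \<and> z \<in> set ys) \<or> precedes ys x z)"

lemma precedes_in_set: "precedes xs x z \<Longrightarrow> x \<in> set xs \<and> z \<in> set xs"
  by (induction xs) auto

lemma precedes_append:
  "precedes (xs @ ys) x z \<longleftrightarrow> precedes xs x z \<or> (x \<in> set xs \<and> z \<in> set ys) \<or> precedes ys x z"
  by (induction xs) auto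

lemma precedes_append_right: "x \<notin> set xs \<Longrightarrow> precedes (xs @ ys) x z \<longleftrightarrow> precedes ys x z"
  by (auto simp: precedes_append dest: precedes_in_set)

lemma precedes_append_cong:
  "set xs = set ys \<Longrightarrow> (precedes xs x z \<longleftrightarrow> precedes ys x z) \<Longrightarrow>
   precedes (P @ xs) x z \<longleftrightarrow> precedes (P @ ys) x z"
  by (simp add: precedes_append)

lemma precedes_asym: "distinct xs \<Longrightarrow> precedes xs x z \<Longrightarrow> \<not> precedes xs z x"
  by (induction xs) (auto dest: precedes_in_set)

lemma precedes_irrefl: "distinct xs \<Longrightarrow> \<not> precedes xs x x"
  by (induction xs) (auto dest: precedes_in_set)

lemma precedes_total:
  "x \<in> set xs \<Longrightarrow> z \<in> set xs \<Longrightarrow> x \<noteq> z \<Longrightarrow> precedes xs x z \<or> precedes xs z x"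
  by (induction xs) auto

lemma precedes_iff_nth:
  "precedes xs x z \<longleftrightarrow> (\<exists>i j. i < j \<and> j < length xs \<and> xs ! i = x \<and> xs ! j = z)"
proof (induction xs)
  case Nil
  then show ?case by simp
next
  case (Cons y ys)
  show ?case
  proof
    assume "precedes (y # ys) x z"
    then consider "y = x" "z \<in> set ys" | "precedes ys x z"
      by auto
    then show "\<exists>i j. i < j \<and> j < length (y # ys) \<and> (y # ys) ! i = x \<and> (y # ys) ! j = z"
    proof cases
      case 1
      then obtain j where "j < length ys" "ys ! j = z"
        by (auto simp: in_set_conv_nth)
      with 1 show ?thesis
        by (intro exI[of _ 0] exI[of _ "Suc j"]) auto
    next
      case 2
      then obtain i j where "i < j" "j < length ys" "ys ! i = x" "ys ! j = z"
        using Cons.IH by auto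
      then show ?thesis
        by (intro exI[of _ "Suc i"] exI[of _ "Suc j"]) auto
    qed
  next
    assume "\<exists>i j. i < j \<and> j < length (y # ys) \<and> (y # ys) ! i = x \<and> (y # ys) ! j = z"
    then obtain i j where ij: "i < j" "j < length (y # ys)" "(y # ys) ! i = x" "(y # ys) ! j = z"
      by blast
    then obtain j' where j': "j = Suc j'"
      by (cases j) auto
    show "precedes (y # ys) x z"
    proof (cases i)
      case 0
      then show ?thesis
        using ij j' by (auto simp: in_set_conv_nth)
    next
      case (Suc i')
      then show ?thesis
        using Cons.IH ij j' by auto
    qed
  qed
qed

lemma distinct_eqI_precedes:
  assumes "distinct xs" "distinct ys" "set xs = set ys" "\<And>x z. precedes xs x z \<longleftrightarrow> precedes ys x z"
  shows "xs = ys"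
  using assms
proof (induction xs arbitrary: ys)
  case Nil
  then show ?case by simp
next
  case (Cons y xs)
  then obtain y' ys' where ys: "ys = y' # ys'"
    by (cases ys) auto
  have "y = y'"
  proof (rule ccontr)
    assume "y \<noteq> y'"
    moreover have "y' \<in> set (y # xs)"
      using Cons.prems(3) ys by simp
    ultimately have "y' \<in> set xs"
      by simp
    then have "precedes ys y y'"
      using Cons.prems(4)[of y y'] by simp
    then show False
      using Cons.prems ys \<open>y \<noteq> y'\<close> by (auto dest: precedes_in_set)
  qed
  have "precedes xs x z \<longleftrightarrow> precedes ys' x z" for x z
    using Cons.prems(1,2) Cons.prems(4)[of x z] ys \<open>y = y'\<close> by (cases "x = y") (auto dest: precedes_in_set)
  moreover have "set xs = set ys'"
    using Cons.prems(1,2,3) ys \<open>y = y'\<close> by (metis distinct.simps(2) list.simps(15) insert_ident)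
  ultimately show ?case
    using Cons.IH Cons.prems ys \<open>y = y'\<close> by auto
qed

lemma pinv_nth: "distinct xs \<Longrightarrow> k < length xs \<Longrightarrow> pinv xs (xs ! k) = Suc k"
  unfolding pinv_def
  by (rule arg_cong[where f = Suc], rule Least_equality) (auto simp: nth_eq_iff_index_eq)

lemma pinv_less_iff_precedes:
  assumes "distinct xs" "x \<in> set xs" "z \<in> set xs"
  shows "pinv xs x < pinv xs z \<longleftrightarrow> precedes xs x z"
proof -
  obtain i j where "i < length xs" "xs ! i = x" "j < length xs" "xs ! j = z"
    using assms(2,3) by (auto simp: in_set_conv_nth)
  moreover from assms(1) this have "pinv xs x < pinv xs z \<longleftrightarrow> i < j"
    by (auto simp: pinv_nth)
  ultimately show ?thesis
    using assms(1) by (auto simp: precedes_iff_nth nth_eq_iff_index_eq)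
qed

section \<open>Bubbling the head of a list\<close>

fun bubble :: "('a \<Rightarrow> 'a \<Rightarrow> bool) \<Rightarrow> 'a list \<Rightarrow> 'a list" where
  "bubble lt (a # b # rest) =
     (if \<not> lt a b \<and> \<not> lt b a then b # bubble lt (a # rest) else a # bubble lt (b # rest))"
| "bubble lt xs = xs"

lemma set_bubble [simp]: "set (bubble lt xs) = set xs"
  by (induction lt xs rule: bubble.induct) auto

lemma length_bubble [simp]: "length (bubble lt xs) = length xs"
  by (induction lt xs rule: bubble.induct) auto

lemma distinct_bubble: "distinct xs \<Longrightarrow> distinct (bubble lt xs)"
  by (metis length_bubble set_bubble card_distinct distinct_card)

lemma fold_tau_eq_bubble:
  "length s = n \<Longrightarrow> 1 \<le> j \<Longrightarrow> j \<le> n \<Longrightarrow>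
   fold (\<lambda>k \<sigma>. tau lt \<sigma> k) [j..<n] s = take (j - 1) s @ bubble lt (drop (j - 1) s)"
proof (induction "n - j" arbitrary: j s)
  case 0
  then have "j = n"
    by simp
  moreover obtain P x where "s = P @ [x]"
    using 0 by (metis append_butlast_last_id le_zero_eq length_0_conv not_one_le_zero)
  ultimately show ?case
    using 0 by simp
next
  case (Suc m)
  then have jn: "j < n"
    by simp
  obtain P a b r where s: "s = P @ a # b # r" and P: "length P = j - 1"
  proof -
    have "drop (j - 1) s \<noteq> []" "drop j s \<noteq> []"
      using Suc.prems jn by auto
    then obtain a r' where d1: "drop (j - 1) s = a # r'"
      by (cases "drop (j - 1) s") auto
    have "r' = drop j s"
      using d1 Suc.prems
      by (metis drop_Suc drop_drop list.sel(3) tl_drop Suc_pred' One_nat_def le_imp_less_Suc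
          less_eq_Suc_le plus_1_eq_Suc)
    then obtain b r where "r' = b # r"
      using \<open>drop j s \<noteq> []\<close> by (cases "drop j s") auto
    then show ?thesis
      using that[of "take (j - 1) s" a b r] d1 Suc.prems
      by (metis append_take_drop_id length_take min.absorb2 le_trans nat_le_linear diff_le_self)
  qed
  have j: "j - 1 = length P" "j = Suc (length P)"
    using P Suc.prems by auto
  have tau: "tau lt s j = (if \<not> lt a b \<and> \<not> lt b a then P @ b # a # r else s)"
    unfolding tau_def Let_def using j s by (simp add: nth_append list_update_append)
  have "fold (\<lambda>k \<sigma>. tau lt \<sigma> k) [j..<n] s = fold (\<lambda>k \<sigma>. tau lt \<sigma> k) [Suc j..<n] (tau lt s j)"
    using jn by (simp add: upt_conv_Cons)
  also have "\<dots> = take j (tau lt s j) @ bubble lt (drop j (tau lt s j))"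
  proof -
    have "length (tau lt s j) = n"
      by (simp add: tau_def Let_def Suc.prems)
    then show ?thesis
      using Suc.hyps(1)[of "Suc j"] Suc.hyps(2) jn by simp
  qed
  also have "\<dots> = take (j - 1) s @ bubble lt (drop (j - 1) s)"
    using tau s j by simp
  finally show ?case .
qed

section \<open>Rooted forests with a natural labeling\<close>

locale natural_forest =
  fixes n :: nat and lt :: "nat \<Rightarrow> nat \<Rightarrow> bool"
  assumes rooted_forest: "rooted_forest n lt"
    and natural_labeling: "natural_labeling lt"
begin

lemma lt_irrefl: "\<not> lt x x"
  using rooted_forest unfolding rooted_forest_def strict_poset_on_def by blast

lemma lt_trans: "lt x y \<Longrightarrow> lt y z \<Longrightarrow> lt x z"
  using rooted_forest unfolding rooted_forest_def strict_poset_on_def by blast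

lemma lt_range: "lt x y \<Longrightarrow> x \<in> {1..n} \<and> y \<in> {1..n}"
  using rooted_forest unfolding rooted_forest_def strict_poset_on_def by blast

lemma lt_imp_less: "lt x y \<Longrightarrow> x < y"
  using natural_labeling unfolding natural_labeling_def by blast

lemma covers_unique: "covers lt x y \<Longrightarrow> covers lt x z \<Longrightarrow> y = z"
  using rooted_forest unfolding rooted_forest_def by blast

lemma covers_imp_lt: "covers lt x y \<Longrightarrow> lt x y"
  unfolding covers_def by blast

lemma cover_below:
  assumes "lt c a"
  obtains q where "covers lt c q" "q = a \<or> lt q a"
proof -
  define q where "q = (LEAST u. lt c u \<and> (u = a \<or> lt u a))"
  have q: "lt c q \<and> (q = a \<or> lt q a)"
    unfolding q_def by (rule LeastI[of _ a]) (use assms in auto)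
  have "covers lt c q"
    unfolding covers_def
  proof (intro conjI notI)
    show "lt c q"
      using q by blast
    assume "\<exists>w. lt c w \<and> lt w q"
    then obtain w where w: "lt c w" "lt w q"
      by blast
    then have "q \<le> w"
    proof -
      have "lt c w \<and> (w = a \<or> lt w a)"
        using q w lt_trans by blast
      then show ?thesis
        unfolding q_def by (rule Least_le)
    qed
    then show False
      using lt_imp_less[OF w(2)] by simp
  qed
  with q that show ?thesis
    by blast
qed

text \<open>This is where the forest hypothesis (unique covers) is used.\<close>

lemma above_comparable: "lt c a \<Longrightarrow> lt c b \<Longrightarrow> a = b \<or> lt a b \<or> lt b a"
proof (induction "n - c" arbitrary: c rule: less_induct)
  case less
  obtain q where q: "covers lt c q" "q = a \<or> lt q a"
    using cover_below[OF less.prems(1)] by blast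
  obtain q' where q': "covers lt c q'" "q' = b \<or> lt q' b"
    using cover_below[OF less.prems(2)] by blast
  have "q' = q"
    using q q' covers_unique by blast
  have "lt c q"
    using q covers_imp_lt by blast
  then have "n - q < n - c"
    using lt_imp_less lt_range by fastforce
  show ?case
  proof (cases "q = a \<or> q = b")
    case True
    then show ?thesis
      using q q' \<open>q' = q\<close> by blast
  next
    case False
    then show ?thesis
      using less.hyps[OF \<open>n - q < n - c\<close>] q q' \<open>q' = q\<close> by blast
  qed
qed

definition up_set :: "nat \<Rightarrow> nat set" where
  "up_set c = insert c {y. lt c y}"

definition order_compatible :: "nat list \<Rightarrow> bool" where
  "order_compatible l \<longleftrightarrow> (\<forall>x z. lt x z \<longrightarrow> x \<in> set l \<longrightarrow> z \<in> set l \<longrightarrow> precedes l x z)"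

text \<open>The relative order of \<open>x\<close> and \<open>z\<close> after promoting \<open>c\<close> in \<open>l\<close>: each element of the
  chain above \<open>c\<close> lands just before the old position of its parent (at the end if it is a root).
  The lemmas below exclude pairs with only \<open>z\<close> in the chain; those follow by antisymmetry.\<close>

definition precedes_promoted :: "nat \<Rightarrow> nat list \<Rightarrow> nat \<Rightarrow> nat \<Rightarrow> bool" where
  "precedes_promoted c l x z \<longleftrightarrow>
     (if x \<in> up_set c \<and> z \<notin> up_set c then \<exists>p. covers lt x p \<and> precedes l p z else precedes l x z)"

lemma up_set_lt: "x \<in> up_set c \<Longrightarrow> lt x p \<Longrightarrow> lt c p"
  unfolding up_set_def using lt_trans by blast

lemma precedes_bubble_incomparable:
  assumes "\<not> lt c b" "\<not> lt b c" "distinct (c # b # rest)"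
    and "z \<in> up_set c \<Longrightarrow> x \<in> up_set c"
    and IH: "x \<noteq> b \<Longrightarrow> z \<noteq> b \<Longrightarrow>
      precedes (bubble lt (c # rest)) x z \<longleftrightarrow> precedes_promoted c (c # rest) x z"
  shows "precedes (bubble lt (c # b # rest)) x z \<longleftrightarrow> precedes_promoted c (c # b # rest) x z"
proof -
  have b: "b \<notin> up_set c"
    using assms(1,3) by (auto simp: up_set_def)
  have bubble: "bubble lt (c # b # rest) = b # bubble lt (c # rest)"
    using assms(1,2) by simp
  have drop_b: "precedes (c # b # rest) u v \<longleftrightarrow> precedes (c # rest) u v" if "u \<noteq> b" "v \<noteq> b" for u v
    using that by auto
  consider "x = b" | "z = b" "x \<noteq> b" | "x \<noteq> b" "z \<noteq> b"
    by blast
  then show ?thesis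
  proof cases
    case 1
    then have "z \<notin> up_set c"
      using assms(4) b by blast
    then have "z \<noteq> c"
      by (simp add: up_set_def)
    have "precedes (bubble lt (c # b # rest)) b z \<longleftrightarrow> z \<in> set (c # rest)"
      using bubble assms(3) by (auto dest: precedes_in_set)
    also have "\<dots> \<longleftrightarrow> precedes (c # b # rest) b z"
      using \<open>z \<noteq> c\<close> assms(3) by (auto dest: precedes_in_set)
    finally show ?thesis
      using 1 b by (simp add: precedes_promoted_def)
  next
    case 2
    have "\<not> precedes (c # b # rest) p b" if "x \<in> up_set c" "covers lt x p" for p
    proof -
      have "p \<noteq> c"
        using that up_set_lt covers_imp_lt lt_irrefl by blast
      then show ?thesis
        using assms(3) by (auto dest: precedes_in_set)
    qed
    moreover have "\<not> precedes (c # b # rest) x b" if "x \<notin> up_set c"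
      using that assms(3) by (auto simp: up_set_def dest: precedes_in_set)
    moreover have "\<not> precedes (bubble lt (c # b # rest)) x b"
      using 2 assms(3) bubble by (auto dest: precedes_in_set)
    ultimately show ?thesis
      using 2 b by (auto simp: precedes_promoted_def)
  next
    case 3
    have "p \<noteq> b" if "x \<in> up_set c" "covers lt x p" for p
      using that assms(1) up_set_lt covers_imp_lt by blast
    then have "precedes_promoted c (c # rest) x z \<longleftrightarrow> precedes_promoted c (c # b # rest) x z"
      using 3 drop_b unfolding precedes_promoted_def by (metis (no_types, lifting))
    then show ?thesis
      using 3 IH bubble by simp
  qed
qed

lemma order_compatible_not_below_second:
  assumes "distinct (c # b # rest)" "order_compatible (c # b # rest)" "y \<in> set rest"
  shows "\<not> lt y b"
proof
  assume "lt y b"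
  then have "precedes (c # b # rest) y b"
    using assms(2,3) unfolding order_compatible_def by simp
  moreover have "precedes (c # b # rest) b y"
    using assms(3) by simp
  ultimately show False
    using precedes_asym[OF assms(1)] by blast
qed

lemma covers_second:
  assumes "lt c b" "distinct (c # b # rest)" "order_compatible (c # b # rest)"
    and "\<forall>y. lt c y \<longrightarrow> y \<in> set (b # rest)"
  shows "covers lt c b"
  unfolding covers_def
proof (intro conjI notI)
  show "lt c b"
    by (fact assms(1))
  assume "\<exists>w. lt c w \<and> lt w b"
  then obtain w where w: "lt c w" "lt w b"
    by blast
  then have "w \<in> set rest"
    using assms(4) lt_irrefl by fastforce
  then show False
    using order_compatible_not_below_second[OF assms(2,3)] w(2) by blast
qed

lemma up_set_second:
  assumes "lt c b" "distinct (c # b # rest)" "order_compatible (c # b # rest)"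
    and "\<forall>y. lt c y \<longrightarrow> y \<in> set (b # rest)" "y \<noteq> c"
  shows "y \<in> up_set c \<longleftrightarrow> y \<in> up_set b"
proof
  assume "y \<in> up_set c"
  then have "lt c y"
    using assms(5) by (simp add: up_set_def)
  show "y \<in> up_set b"
  proof (cases "y = b")
    case False
    then have "\<not> lt y b"
      using assms(4) \<open>lt c y\<close> order_compatible_not_below_second[OF assms(2,3)] by auto
    then show ?thesis
      using False above_comparable[OF assms(1) \<open>lt c y\<close>] by (simp add: up_set_def)
  qed (simp add: up_set_def)
next
  assume "y \<in> up_set b"
  then show "y \<in> up_set c"
    using assms(1) lt_trans by (auto simp: up_set_def)
qed

lemma precedes_bubble_cover:
  assumes "lt c b" "distinct (c # b # rest)" "order_compatible (c # b # rest)"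
    and "\<forall>y. lt c y \<longrightarrow> y \<in> set (b # rest)"
    and "z \<in> up_set c \<Longrightarrow> x \<in> up_set c"
    and IH: "x \<noteq> c \<Longrightarrow> z \<noteq> c \<Longrightarrow> (z \<in> up_set b \<Longrightarrow> x \<in> up_set b) \<Longrightarrow>
      precedes (bubble lt (b # rest)) x z \<longleftrightarrow> precedes_promoted b (b # rest) x z"
  shows "precedes (bubble lt (c # b # rest)) x z \<longleftrightarrow> precedes_promoted c (c # b # rest) x z"
proof -
  have b_cover: "covers lt c b"
    using covers_second[OF assms(1-4)] .
  have up_eq: "y \<in> up_set c \<longleftrightarrow> y \<in> up_set b" if "y \<noteq> c" for y
    using up_set_second[OF assms(1-4) that] .
  have bubble: "bubble lt (c # b # rest) = c # bubble lt (b # rest)"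
    using assms(1) by simp
  have drop_c: "precedes (c # b # rest) u v \<longleftrightarrow> precedes (b # rest) u v" if "u \<noteq> c" for u v
    using that by simp
  have c_notin: "c \<notin> set (b # rest)"
    using assms(2) by simp
  consider "x = c" | "z = c" "x \<noteq> c" | "x \<noteq> c" "z \<noteq> c"
    by blast
  then show ?thesis
  proof cases
    case 1
    have b_up: "b \<in> up_set c"
      using assms(1) by (simp add: up_set_def)
    have "(\<exists>p. covers lt c p \<and> precedes (c # b # rest) p z) \<longleftrightarrow> precedes (c # b # rest) b z"
      using b_cover covers_unique by blast
    moreover have "precedes (c # b # rest) b z \<longleftrightarrow> z \<in> set (b # rest)" if "z \<notin> up_set c"
      using that b_up assms(2) by (auto dest: precedes_in_set)
    moreover have "c \<in> up_set c"
      by (simp add: up_set_def)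
    moreover have "precedes (c # b # rest) c z \<longleftrightarrow> z \<in> set (b # rest)"
      using c_notin by (auto dest: precedes_in_set)
    moreover have "precedes (bubble lt (c # b # rest)) c z \<longleftrightarrow> z \<in> set (b # rest)"
      using bubble c_notin by (auto dest: precedes_in_set)
    ultimately show ?thesis
      using 1 by (cases "z \<in> up_set c") (simp_all add: precedes_promoted_def)
  next
    case 2
    then have "x \<in> up_set c"
      using assms(5) by (simp add: up_set_def)
    moreover have "\<not> precedes (bubble lt (c # b # rest)) x c" "\<not> precedes (c # b # rest) x c"
      using 2 bubble c_notin by (auto dest: precedes_in_set)
    ultimately show ?thesis
      using 2 by (simp add: precedes_promoted_def up_set_def)
  next
    case 3
    have "p \<noteq> c" if "x \<in> up_set c" "covers lt x p" for p
      using that up_set_lt covers_imp_lt lt_irrefl by blast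
    then have "precedes_promoted b (b # rest) x z \<longleftrightarrow> precedes_promoted c (c # b # rest) x z"
      using 3 up_eq drop_c unfolding precedes_promoted_def by (metis (no_types, lifting))
    moreover have "z \<in> up_set b \<Longrightarrow> x \<in> up_set b"
      using 3 up_eq assms(5) by blast
    ultimately show ?thesis
      using 3 IH bubble by simp
  qed
qed

lemma order_compatible_tl: "distinct (c # l) \<Longrightarrow> order_compatible (c # l) \<Longrightarrow> order_compatible l"
  unfolding order_compatible_def by auto

lemma order_compatible_drop_second:
  "distinct (c # b # l) \<Longrightarrow> order_compatible (c # b # l) \<Longrightarrow> order_compatible (c # l)"
  unfolding order_compatible_def by auto

lemma precedes_bubble:
  assumes "distinct (c # rest)" "order_compatible (c # rest)" "\<forall>y. lt c y \<longrightarrow> y \<in> set rest"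
    and "z \<in> up_set c \<Longrightarrow> x \<in> up_set c"
  shows "precedes (bubble lt (c # rest)) x z \<longleftrightarrow> precedes_promoted c (c # rest) x z"
  using assms
proof (induction rest arbitrary: c)
  case Nil
  then show ?case
    by (auto simp: precedes_promoted_def up_set_def covers_def)
next
  case (Cons b rest)
  show ?case
  proof (cases "lt c b \<or> lt b c")
    case False
    with Cons.prems show ?thesis
      by (intro precedes_bubble_incomparable Cons.IH)
        (auto intro: order_compatible_drop_second)
  next
    case True
    have "\<not> lt b c"
    proof
      assume "lt b c"
      then have "precedes (c # b # rest) b c"
        using Cons.prems(2) unfolding order_compatible_def by simp
      then show False
        using Cons.prems(1) by (auto dest: precedes_in_set)
    qed
    with True have "lt c b"
      by blast
    moreover have "\<forall>y. lt b y \<longrightarrow> y \<in> set rest"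
      using \<open>lt c b\<close> Cons.prems(3) lt_trans lt_irrefl by fastforce
    ultimately show ?thesis
      using Cons.prems
      by (intro precedes_bubble_cover Cons.IH) (auto intro: order_compatible_tl)
  qed
qed

section \<open>Promotion on linear extensions\<close>

lemma mem_linext_iff:
  "\<rho> \<in> linext n lt \<longleftrightarrow> distinct \<rho> \<and> set \<rho> = {1..n} \<and> (\<forall>i j. lt i j \<longrightarrow> precedes \<rho> i j)"
  unfolding linext_def is_perm_def using pinv_less_iff_precedes lt_range by auto

lemma length_linext: "\<rho> \<in> linext n lt \<Longrightarrow> length \<rho> = n"
  by (metis card_atLeastAtMost diff_Suc_1 distinct_card mem_linext_iff)

lemma finite_linext: "finite (linext n lt)"
proof (rule finite_subset)
  show "linext n lt \<subseteq> {xs. set xs \<subseteq> {1..n} \<and> length xs = n}"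
    using mem_linext_iff length_linext by auto
qed (simp add: finite_lists_length_eq)

definition promote :: "nat \<Rightarrow> nat list \<Rightarrow> nat list" where
  "promote g \<rho> = bdry n lt \<rho> (pinv \<rho> g)"

lemma promote_decomp:
  assumes "\<rho> \<in> linext n lt" "g \<in> {1..n}"
  obtains P rest where "\<rho> = P @ g # rest" "promote g \<rho> = P @ bubble lt (g # rest)"
proof -
  have d: "distinct \<rho>" "set \<rho> = {1..n}" "length \<rho> = n"
    using assms mem_linext_iff length_linext by auto
  obtain k where k: "k < length \<rho>" "\<rho> ! k = g"
    using d assms(2) by (metis in_set_conv_nth)
  have "pinv \<rho> g = Suc k"
    using pinv_nth[OF d(1) k(1)] k(2) by simp
  then have "promote g \<rho> = take k \<rho> @ bubble lt (drop k \<rho>)"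
    unfolding promote_def bdry_def using fold_tau_eq_bubble[of \<rho> n "Suc k" lt] d(3) k by simp
  moreover have "drop k \<rho> = g # drop (Suc k) \<rho>"
    using k by (metis Cons_nth_drop_Suc)
  ultimately show ?thesis
    using that by (metis append_take_drop_id)
qed

lemma promote_perm:
  assumes "\<rho> \<in> linext n lt" "g \<in> {1..n}"
  shows "set (promote g \<rho>) = set \<rho>" "distinct (promote g \<rho>)"
proof -
  obtain P rest where "\<rho> = P @ g # rest" "promote g \<rho> = P @ bubble lt (g # rest)"
    using promote_decomp[OF assms] .
  moreover have "distinct \<rho>"
    using assms(1) mem_linext_iff by blast
  ultimately show "set (promote g \<rho>) = set \<rho>" "distinct (promote g \<rho>)"
    using distinct_bubble[of "g # rest" lt] by auto
qed

lemma linext_suffix: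
  assumes "P @ g # rest \<in> linext n lt"
  shows "order_compatible (g # rest)" "\<forall>y. lt g y \<longrightarrow> y \<in> set rest"
proof -
  have dist: "distinct (P @ g # rest)" and in_order: "\<And>u v. lt u v \<Longrightarrow> precedes (P @ g # rest) u v"
    using assms mem_linext_iff by blast+
  have "u \<notin> set P" if "u \<in> set (g # rest)" for u
    using that dist by auto
  then show "order_compatible (g # rest)"
    unfolding order_compatible_def using in_order precedes_append_right by metis
  show "\<forall>y. lt g y \<longrightarrow> y \<in> set rest"
  proof (intro allI impI)
    fix y
    assume "lt g y"
    then have "precedes (g # rest) g y"
      using in_order[of g y] dist by (simp add: precedes_append_right)
    then show "y \<in> set rest"
      using dist by (auto dest: precedes_in_set)
  qed
qed

lemma precedes_promote:
  assumes "\<rho> \<in> linext n lt" "g \<in> {1..n}" "z \<in> up_set g \<Longrightarrow> x \<in> up_set g"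
  shows "precedes (promote g \<rho>) x z \<longleftrightarrow> precedes_promoted g \<rho> x z"
proof -
  obtain P rest where \<rho>: "\<rho> = P @ g # rest" and promote: "promote g \<rho> = P @ bubble lt (g # rest)"
    using promote_decomp[OF assms(1,2)] .
  have compatible: "order_compatible (g # rest)" and above: "\<forall>y. lt g y \<longrightarrow> y \<in> set rest"
    using linext_suffix assms(1) \<rho> by blast+
  have dist: "distinct \<rho>"
    using assms(1) mem_linext_iff by blast
  have disjoint: "u \<notin> set P" if "u \<in> set (g # rest)" for u
    using that dist \<rho> by auto
  have suffix: "precedes \<rho> u v \<longleftrightarrow> precedes (g # rest) u v" if "u \<notin> set P" for u v
    using that \<rho> by (simp add: precedes_append_right)
  have up_suffix: "up_set g \<subseteq> set (g # rest)"
    using above by (auto simp: up_set_def)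
  have bubble: "precedes (bubble lt (g # rest)) x z \<longleftrightarrow> precedes_promoted g (g # rest) x z"
    using precedes_bubble[OF _ compatible above assms(3)] dist \<rho> by simp
  show ?thesis
  proof (cases "x \<in> up_set g")
    case True
    then have "x \<notin> set P"
      using up_suffix disjoint by (meson subsetD)
    have parent_suffix: "precedes \<rho> p z \<longleftrightarrow> precedes (g # rest) p z" if "covers lt x p" for p
    proof -
      have "p \<in> up_set g"
        using up_set_lt[OF True covers_imp_lt[OF that]] by (simp add: up_set_def)
      then show ?thesis
        using up_suffix disjoint suffix by (meson subsetD)
    qed
    have "precedes (promote g \<rho>) x z \<longleftrightarrow> precedes (bubble lt (g # rest)) x z"
      using promote \<open>x \<notin> set P\<close> by (simp add: precedes_append_right)
    also have "\<dots> \<longleftrightarrow> precedes_promoted g (g # rest) x z"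
      by (fact bubble)
    also have "\<dots> \<longleftrightarrow> precedes_promoted g \<rho> x z"
      using suffix[OF \<open>x \<notin> set P\<close>] parent_suffix by (auto simp: precedes_promoted_def)
    finally show ?thesis .
  next
    case False
    then have "precedes (bubble lt (g # rest)) x z \<longleftrightarrow> precedes (g # rest) x z"
      using bubble by (simp add: precedes_promoted_def)
    then have "precedes (promote g \<rho>) x z \<longleftrightarrow> precedes (P @ g # rest) x z"
      unfolding promote by (intro precedes_append_cong) simp_all
    then show ?thesis
      using False by (simp add: \<rho>[symmetric] precedes_promoted_def)
  qed
qed

lemma precedes_linext_lt: "\<rho> \<in> linext n lt \<Longrightarrow> lt x z \<Longrightarrow> precedes \<rho> x z"
  using mem_linext_iff by blast

lemma precedes_linext_swap:
  "\<rho> \<in> linext n lt \<Longrightarrow> x \<in> {1..n} \<Longrightarrow> z \<in> {1..n} \<Longrightarrow> x \<noteq> z \<Longrightarrow>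
   precedes \<rho> x z \<longleftrightarrow> \<not> precedes \<rho> z x"
  using mem_linext_iff precedes_total precedes_asym by metis

lemma promote_in_linext:
  assumes "\<rho> \<in> linext n lt" "g \<in> {1..n}"
  shows "promote g \<rho> \<in> linext n lt"
proof -
  have perm: "distinct (promote g \<rho>)" "set (promote g \<rho>) = {1..n}"
    using promote_perm[OF assms] assms(1) mem_linext_iff by auto
  have dist: "distinct \<rho>"
    using assms(1) mem_linext_iff by blast
  have "precedes (promote g \<rho>) i j" if "lt i j" for i j
  proof (cases "j \<in> up_set g \<longrightarrow> i \<in> up_set g")
    case True
    have "i \<in> up_set g \<Longrightarrow> j \<in> up_set g"
      using up_set_lt[OF _ \<open>lt i j\<close>] by (simp add: up_set_def)
    moreover have "precedes (promote g \<rho>) i j \<longleftrightarrow> precedes_promoted g \<rho> i j"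
      using True by (intro precedes_promote[OF assms]) blast
    ultimately show ?thesis
      using precedes_linext_lt[OF assms(1) \<open>lt i j\<close>] by (auto simp: precedes_promoted_def)
  next
    case False
    have "\<not> precedes \<rho> p i" if "covers lt j p" for p
    proof -
      have "lt i p"
        using lt_trans[OF \<open>lt i j\<close> covers_imp_lt[OF that]] .
      then show ?thesis
        using precedes_asym[OF dist] precedes_linext_lt[OF assms(1)] by blast
    qed
    moreover have "precedes (promote g \<rho>) j i \<longleftrightarrow> precedes_promoted g \<rho> j i"
      using False by (intro precedes_promote[OF assms]) blast
    ultimately have "\<not> precedes (promote g \<rho>) j i"
      using False by (simp add: precedes_promoted_def)
    moreover have "i \<noteq> j" "i \<in> {1..n}" "j \<in> {1..n}"
      using \<open>lt i j\<close> lt_irrefl lt_range by auto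
    ultimately show ?thesis
      using perm precedes_total by metis
  qed
  with perm show ?thesis
    using mem_linext_iff by blast
qed

definition promote_word :: "nat list \<Rightarrow> nat list \<Rightarrow> nat list" where
  "promote_word ws \<rho> = fold promote ws \<rho>"

lemma promote_word_Nil [simp]: "promote_word [] \<rho> = \<rho>"
  by (simp add: promote_word_def)

lemma promote_word_Cons [simp]: "promote_word (g # ws) \<rho> = promote_word ws (promote g \<rho>)"
  by (simp add: promote_word_def)

lemma promote_word_append: "promote_word (a @ b) \<rho> = promote_word b (promote_word a \<rho>)"
  by (simp add: promote_word_def)

lemma promote_word_in_linext:
  "set ws \<subseteq> {1..n} \<Longrightarrow> \<rho> \<in> linext n lt \<Longrightarrow> promote_word ws \<rho> \<in> linext n lt"
  by (induction ws arbitrary: \<rho>) (simp_all add: promote_in_linext)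

section \<open>High powers of a word absorb words in its letters\<close>

lemma up_set_comparable: "x \<in> up_set g \<Longrightarrow> z \<in> up_set g \<Longrightarrow> x = z \<or> lt x z \<or> lt z x"
  unfolding up_set_def using above_comparable by auto

definition up_word :: "nat list \<Rightarrow> nat set" where
  "up_word w = (\<Union>g\<in>set w. up_set g)"

lemma precedes_promote_word_outside:
  assumes "\<rho> \<in> linext n lt" "set v \<subseteq> {1..n}" "x \<notin> up_word v" "z \<notin> up_word v"
  shows "precedes (promote_word v \<rho>) x z \<longleftrightarrow> precedes \<rho> x z"
  using assms
proof (induction v arbitrary: \<rho>)
  case Nil
  then show ?case by simp
next
  case (Cons g v)
  then have "precedes (promote g \<rho>) x z \<longleftrightarrow> precedes \<rho> x z"
    using precedes_promote[of \<rho> g z x] by (simp add: up_word_def precedes_promoted_def)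
  with Cons show ?case
    by (simp add: up_word_def promote_in_linext)
qed

text \<open>The weight of a pair drops when one of its elements is replaced by its parent.\<close>

definition weight :: "nat \<Rightarrow> nat \<Rightarrow> nat" where
  "weight x z = (n - x) + (n - z)"

definition agree :: "(nat \<Rightarrow> nat \<Rightarrow> bool) \<Rightarrow> nat list \<Rightarrow> nat list \<Rightarrow> bool" where
  "agree R \<rho> \<sigma> \<longleftrightarrow> (\<forall>x\<in>{1..n}. \<forall>z\<in>{1..n}. R x z \<longrightarrow> (precedes \<rho> x z \<longleftrightarrow> precedes \<sigma> x z))"

lemma promote_agree_parent:
  assumes "\<rho> \<in> linext n lt" "\<sigma> \<in> linext n lt" "g \<in> {1..n}"
    and "agree (\<lambda>x z. weight x z < k) \<rho> \<sigma>"
    and "x \<in> {1..n}" "z \<in> {1..n}" "weight x z \<le> k" "x \<in> up_set g" "z \<notin> up_set g"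
  shows "precedes (promote g \<rho>) x z \<longleftrightarrow> precedes (promote g \<sigma>) x z"
proof -
  have "precedes \<rho> p z \<longleftrightarrow> precedes \<sigma> p z" if "covers lt x p" for p
  proof -
    have p: "p \<in> {1..n}" "x < p"
      using covers_imp_lt[OF that] lt_range lt_imp_less by auto
    then have "weight p z < k"
      using assms(7) by (auto simp: weight_def)
    then show ?thesis
      using assms(4,6) p(1) unfolding agree_def by blast
  qed
  then show ?thesis
    using assms(8,9) precedes_promote[OF assms(1,3), of z x] precedes_promote[OF assms(2,3), of z x]
    by (simp add: precedes_promoted_def) blast
qed

lemma promote_agree:
  assumes "\<rho> \<in> linext n lt" "\<sigma> \<in> linext n lt" "g \<in> {1..n}"
    and "agree (\<lambda>x z. weight x z < k) \<rho> \<sigma>"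
    and "x \<in> {1..n}" "z \<in> {1..n}" "weight x z \<le> k"
    and "x \<notin> up_set g \<Longrightarrow> z \<notin> up_set g \<Longrightarrow> precedes \<rho> x z \<longleftrightarrow> precedes \<sigma> x z"
  shows "precedes (promote g \<rho>) x z \<longleftrightarrow> precedes (promote g \<sigma>) x z"
proof -
  have linext: "promote g \<rho> \<in> linext n lt" "promote g \<sigma> \<in> linext n lt"
    using promote_in_linext assms(1-3) by auto
  consider "x \<in> up_set g" "z \<in> up_set g" | "x \<in> up_set g" "z \<notin> up_set g"
    | "x \<notin> up_set g" "z \<in> up_set g" | "x \<notin> up_set g" "z \<notin> up_set g"
    by blast
  then show ?thesis
  proof cases
    case 1
    then consider "x = z" | "lt x z" | "lt z x"
      using up_set_comparable by blast
    then show ?thesis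
      using linext precedes_linext_lt precedes_linext_swap lt_irrefl assms(5,6) mem_linext_iff
        precedes_irrefl by metis
  next
    case 2
    then show ?thesis
      using promote_agree_parent[OF assms(1-7)] by blast
  next
    case 3
    then have "x \<noteq> z" "weight z x \<le> k"
      using assms(7) by (auto simp: weight_def)
    then show ?thesis
      using 3 promote_agree_parent[OF assms(1-4,6,5)] precedes_linext_swap[OF linext(1) assms(5,6)]
        precedes_linext_swap[OF linext(2) assms(5,6)] by blast
  next
    case 4
    then show ?thesis
      using assms(8) precedes_promote[OF assms(1,3), of z x] precedes_promote[OF assms(2,3), of z x]
      by (simp add: precedes_promoted_def)
  qed
qed

lemma promote_word_agree_touching:
  assumes "\<rho> \<in> linext n lt" "\<sigma> \<in> linext n lt" "set v \<subseteq> {1..n}"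
    and "agree (\<lambda>x z. weight x z < k) \<rho> \<sigma>"
    and "agree (\<lambda>x z. weight x z \<le> k \<and> (x \<in> S \<or> z \<in> S)) \<rho> \<sigma>"
  shows "agree (\<lambda>x z. weight x z < k) (promote_word v \<rho>) (promote_word v \<sigma>) \<and>
    agree (\<lambda>x z. weight x z \<le> k \<and> (x \<in> S \<union> up_word v \<or> z \<in> S \<union> up_word v))
      (promote_word v \<rho>) (promote_word v \<sigma>)"
  using assms
proof (induction v arbitrary: \<rho> \<sigma> S)
  case Nil
  then show ?case
    by (simp add: up_word_def)
next
  case (Cons g v)
  then have g: "g \<in> {1..n}"
    by simp
  have "agree (\<lambda>x z. weight x z < k) (promote g \<rho>) (promote g \<sigma>)"
    unfolding agree_def
  proof (intro ballI impI)
    fix x z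
    assume "x \<in> {1..n}" "z \<in> {1..n}" "weight x z < k"
    then show "precedes (promote g \<rho>) x z \<longleftrightarrow> precedes (promote g \<sigma>) x z"
      using Cons.prems(4) by (intro promote_agree[OF Cons.prems(1,2) g]) (auto simp: agree_def)
  qed
  moreover have "agree (\<lambda>x z. weight x z \<le> k \<and> (x \<in> S \<union> up_set g \<or> z \<in> S \<union> up_set g))
      (promote g \<rho>) (promote g \<sigma>)"
    unfolding agree_def
  proof (intro ballI impI)
    fix x z
    assume "x \<in> {1..n}" "z \<in> {1..n}" "weight x z \<le> k \<and> (x \<in> S \<union> up_set g \<or> z \<in> S \<union> up_set g)"
    then show "precedes (promote g \<rho>) x z \<longleftrightarrow> precedes (promote g \<sigma>) x z"
      using Cons.prems(5) by (intro promote_agree[OF Cons.prems(1,2) g Cons.prems(4)]) (auto simp: agree_def)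
  qed
  ultimately show ?case
    using Cons.IH[of "promote g \<rho>" "promote g \<sigma>" "S \<union> up_set g"] Cons.prems(1-3) g
    by (simp add: promote_in_linext up_word_def Un_assoc)
qed

lemma promote_word_agree_step:
  assumes "\<rho> \<in> linext n lt" "\<sigma> \<in> linext n lt" "set w \<subseteq> {1..n}"
    and "agree (\<lambda>x z. weight x z < k) \<rho> \<sigma>"
    and "agree (\<lambda>x z. x \<notin> up_word w \<and> z \<notin> up_word w) \<rho> \<sigma>"
  shows "agree (\<lambda>x z. weight x z < Suc k) (promote_word w \<rho>) (promote_word w \<sigma>)"
proof -
  have "agree (\<lambda>x z. weight x z \<le> k \<and> (x \<in> up_word w \<or> z \<in> up_word w))
      (promote_word w \<rho>) (promote_word w \<sigma>)"
    using promote_word_agree_touching[OF assms(1-4), of "{}"] by (simp add: agree_def)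
  moreover have "agree (\<lambda>x z. x \<notin> up_word w \<and> z \<notin> up_word w) (promote_word w \<rho>) (promote_word w \<sigma>)"
    using assms(5) precedes_promote_word_outside[OF assms(1,3)] precedes_promote_word_outside[OF assms(2,3)]
    by (simp add: agree_def)
  ultimately show ?thesis
    unfolding agree_def by (metis less_Suc_eq_le)
qed

lemma promote_word_power_agree:
  assumes "\<rho> \<in> linext n lt" "\<sigma> \<in> linext n lt" "set w \<subseteq> {1..n}"
    and "agree (\<lambda>x z. x \<notin> up_word w \<and> z \<notin> up_word w) \<rho> \<sigma>"
  shows "agree (\<lambda>x z. weight x z < m)
    (promote_word (concat (replicate m w)) \<rho>) (promote_word (concat (replicate m w)) \<sigma>)"
proof -
  have "agree (\<lambda>x z. weight x z < k + m)
      (promote_word (concat (replicate m w)) \<rho>) (promote_word (concat (replicate m w)) \<sigma>)"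
    if "agree (\<lambda>x z. weight x z < k) \<rho> \<sigma>" for k
    using assms(1,2,4) that
  proof (induction m arbitrary: k \<rho> \<sigma>)
    case 0
    then show ?case by simp
  next
    case (Suc m)
    have "agree (\<lambda>x z. x \<notin> up_word w \<and> z \<notin> up_word w) (promote_word w \<rho>) (promote_word w \<sigma>)"
      using Suc.prems(3) precedes_promote_word_outside[OF Suc.prems(1) assms(3)]
        precedes_promote_word_outside[OF Suc.prems(2) assms(3)]
      by (simp add: agree_def)
    then have "agree (\<lambda>x z. weight x z < Suc k + m)
        (promote_word (concat (replicate m w)) (promote_word w \<rho>))
        (promote_word (concat (replicate m w)) (promote_word w \<sigma>))"
      using Suc.IH promote_word_in_linext assms(3) Suc.prems promote_word_agree_step by blast
    then show ?case
      by (simp add: promote_word_append)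
  qed
  from this[of 0] show ?thesis
    by (simp add: agree_def)
qed

lemma promote_word_power_absorbs:
  assumes "\<rho> \<in> linext n lt" "set d \<subseteq> set w" "set w \<subseteq> {1..n}"
  shows "promote_word (concat (replicate (2 * n) w)) (promote_word d \<rho>) =
    promote_word (concat (replicate (2 * n) w)) \<rho>"
    (is "promote_word ?W _ = _")
proof -
  have d: "set d \<subseteq> {1..n}" "up_word d \<subseteq> up_word w"
    using assms(2,3) by (auto simp: up_word_def)
  have linext: "promote_word d \<rho> \<in> linext n lt"
    using promote_word_in_linext[OF d(1) assms(1)] .
  have "agree (\<lambda>x z. x \<notin> up_word w \<and> z \<notin> up_word w) (promote_word d \<rho>) \<rho>"
    using precedes_promote_word_outside[OF assms(1) d(1)] d(2) by (auto simp: agree_def)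
  then have "agree (\<lambda>x z. weight x z < 2 * n) (promote_word ?W (promote_word d \<rho>)) (promote_word ?W \<rho>)"
    by (rule promote_word_power_agree[OF linext assms(1,3)])
  moreover have "weight x z < 2 * n" if "x \<in> {1..n}" "z \<in> {1..n}" for x z
    using that by (auto simp: weight_def)
  moreover have "set ?W \<subseteq> {1..n}"
    using assms(3) by (auto simp: set_replicate_conv_if)
  then have "promote_word ?W (promote_word d \<rho>) \<in> linext n lt" "promote_word ?W \<rho> \<in> linext n lt"
    using promote_word_in_linext linext assms(1) by auto
  ultimately show ?thesis
    unfolding agree_def mem_linext_iff
    by (metis distinct_eqI_precedes precedes_in_set)
qed

lemma promote_word_power_stable:
  assumes "\<And>\<pi>. \<pi> \<in> linext n lt \<Longrightarrow> promote_word a \<pi> = promote_word a (promote_word w \<pi>)"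
    and "set w \<subseteq> {1..n}" "\<pi> \<in> linext n lt"
  shows "promote_word a \<pi> = promote_word a (promote_word (concat (replicate m w)) \<pi>)"
  using assms(3)
proof (induction m arbitrary: \<pi>)
  case 0
  then show ?case by simp
next
  case (Suc m)
  then have "promote_word a (promote_word w \<pi>) =
      promote_word a (promote_word (concat (replicate m w)) (promote_word w \<pi>))"
    using promote_word_in_linext[OF assms(2)] by blast
  then show ?case
    using assms(1)[OF Suc.prems] by (simp add: promote_word_append)
qed

lemma promote_word_mutual_eq:
  assumes "set c \<subseteq> {1..n}" "set d \<subseteq> {1..n}"
    and a: "\<And>\<pi>. \<pi> \<in> linext n lt \<Longrightarrow> promote_word a \<pi> = promote_word (c @ b) \<pi>"
    and b: "\<And>\<pi>. \<pi> \<in> linext n lt \<Longrightarrow> promote_word b \<pi> = promote_word (d @ a) \<pi>"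
    and "\<pi> \<in> linext n lt"
  shows "promote_word a \<pi> = promote_word b \<pi>"
proof -
  define w where "w = c @ d"
  let ?W = "concat (replicate (2 * n) w)"
  have w: "set w \<subseteq> {1..n}" "set d \<subseteq> set w"
    using assms(1,2) by (auto simp: w_def)
  have stable: "promote_word a \<sigma> = promote_word a (promote_word w \<sigma>)" if "\<sigma> \<in> linext n lt" for \<sigma>
    using a[OF that] b[OF promote_word_in_linext[OF assms(1) that]]
    by (simp add: w_def promote_word_append)
  have "promote_word b \<pi> = promote_word a (promote_word d \<pi>)"
    using b[OF assms(5)] by (simp add: promote_word_append)
  also have "\<dots> = promote_word a (promote_word ?W (promote_word d \<pi>))"
    using promote_word_power_stable[OF stable w(1) promote_word_in_linext[OF assms(2,5)]] .
  also have "\<dots> = promote_word a (promote_word ?W \<pi>)"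
    using promote_word_power_absorbs[OF assms(5) w(2,1)] by simp
  also have "\<dots> = promote_word a \<pi>"
    using promote_word_power_stable[OF stable w(1) assms(5)] by simp
  finally show ?thesis ..
qed

section \<open>The monoid of promotion matrices\<close>

definition word_matrix :: "nat list \<Rightarrow> mat" where
  "word_matrix ws = (\<lambda>\<pi>' \<pi>. if \<pi> \<in> linext n lt \<and> \<pi>' = promote_word ws \<pi> then 1 else 0)"

lemma G_eq_word_matrix: "i \<in> {1..n} \<Longrightarrow> G n lt i = word_matrix [i]"
  unfolding G_def word_matrix_def using promote_in_linext
  by (auto simp: promote_def intro!: ext)

lemma idm_eq_word_matrix: "idm n lt = word_matrix []"
  unfolding idm_def word_matrix_def by (auto intro!: ext)

lemma mmul_word_matrix:
  assumes "set b \<subseteq> {1..n}"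
  shows "mmul n lt (word_matrix a) (word_matrix b) = word_matrix (b @ a)"
proof (intro ext)
  fix \<pi>' \<pi>
  show "mmul n lt (word_matrix a) (word_matrix b) \<pi>' \<pi> = word_matrix (b @ a) \<pi>' \<pi>"
  proof (cases "\<pi> \<in> linext n lt")
    case False
    then show ?thesis
      unfolding mmul_def word_matrix_def by simp
  next
    case True
    define \<sigma> where "\<sigma> = promote_word b \<pi>"
    have "\<sigma> \<in> linext n lt"
      unfolding \<sigma>_def using promote_word_in_linext[OF assms True] .
    have "mmul n lt (word_matrix a) (word_matrix b) \<pi>' \<pi> =
        (\<Sum>\<tau>\<in>linext n lt. if \<tau> = \<sigma> then (if \<pi>' = promote_word a \<sigma> then 1 else 0) else 0)"
      unfolding mmul_def word_matrix_def \<sigma>_def[symmetric] using True by (intro sum.cong) auto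
    also have "\<dots> = word_matrix (b @ a) \<pi>' \<pi>"
      using \<open>\<sigma> \<in> linext n lt\<close> finite_linext True
      by (simp add: word_matrix_def \<sigma>_def promote_word_append)
    finally show ?thesis .
  qed
qed

lemma gen_monoid_word_matrix:
  "A \<in> gen_monoid n lt \<Longrightarrow> \<exists>ws. set ws \<subseteq> {1..n} \<and> A = word_matrix ws"
proof (induction rule: gen_monoid.induct)
  case one
  then show ?case
    using idm_eq_word_matrix by (intro exI[of _ "[]"]) auto
next
  case (gen i)
  then show ?case
    using G_eq_word_matrix by (intro exI[of _ "[i]"]) auto
next
  case (mult A B)
  then obtain a b where "set a \<subseteq> {1..n}" "A = word_matrix a" "set b \<subseteq> {1..n}" "B = word_matrix b"
    by blast
  then show ?case
    using mmul_word_matrix by (intro exI[of _ "b @ a"]) auto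
qed

lemma word_matrix_eq_iff:
  "word_matrix a = word_matrix b \<longleftrightarrow> (\<forall>\<pi>\<in>linext n lt. promote_word a \<pi> = promote_word b \<pi>)"
proof
  assume eq: "word_matrix a = word_matrix b"
  show "\<forall>\<pi>\<in>linext n lt. promote_word a \<pi> = promote_word b \<pi>"
  proof
    fix \<pi>
    assume "\<pi> \<in> linext n lt"
    then have "word_matrix a (promote_word a \<pi>) \<pi> = 1"
      by (simp add: word_matrix_def)
    then have "word_matrix b (promote_word a \<pi>) \<pi> = 1"
      by (simp add: eq)
    then show "promote_word a \<pi> = promote_word b \<pi>"
      by (simp add: word_matrix_def split: if_splits)
  qed
qed (auto simp: word_matrix_def intro!: ext)

lemma right_ideal_eq_imp_factors:
  assumes "x \<in> gen_monoid n lt" "y \<in> gen_monoid n lt"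
    and "mmul n lt x ` gen_monoid n lt = mmul n lt y ` gen_monoid n lt"
  obtains C where "C \<in> gen_monoid n lt" "x = mmul n lt y C"
proof -
  obtain a where "set a \<subseteq> {1..n}" "x = word_matrix a"
    using gen_monoid_word_matrix[OF assms(1)] by blast
  then have "x = mmul n lt x (idm n lt)"
    using idm_eq_word_matrix mmul_word_matrix[of "[]" a] by simp
  then have "x \<in> mmul n lt y ` gen_monoid n lt"
    using assms(3) gen_monoid.one by blast
  with that show ?thesis
    by blast
qed

lemma R_trivial_gen_monoid: "R_trivial (gen_monoid n lt) (mmul n lt)"
  unfolding R_trivial_def
proof (intro ballI impI)
  fix x y
  assume x: "x \<in> gen_monoid n lt" and y: "y \<in> gen_monoid n lt"
    and eq: "mmul n lt x ` gen_monoid n lt = mmul n lt y ` gen_monoid n lt"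
  obtain C where C: "C \<in> gen_monoid n lt" "x = mmul n lt y C"
    using right_ideal_eq_imp_factors[OF x y eq] .
  obtain D where D: "D \<in> gen_monoid n lt" "y = mmul n lt x D"
    using right_ideal_eq_imp_factors[OF y x eq[symmetric]] .
  obtain a where a: "set a \<subseteq> {1..n}" "x = word_matrix a"
    using gen_monoid_word_matrix[OF x] by blast
  obtain b where b: "set b \<subseteq> {1..n}" "y = word_matrix b"
    using gen_monoid_word_matrix[OF y] by blast
  obtain c where c: "set c \<subseteq> {1..n}" "C = word_matrix c"
    using gen_monoid_word_matrix[OF C(1)] by blast
  obtain d where d: "set d \<subseteq> {1..n}" "D = word_matrix d"
    using gen_monoid_word_matrix[OF D(1)] by blast
  have "word_matrix a = word_matrix (c @ b)"
    using a(2) b(2) c C(2) mmul_word_matrix[OF c(1), of b] by simp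
  moreover have "word_matrix b = word_matrix (d @ a)"
    using a(2) b(2) d D(2) mmul_word_matrix[OF d(1), of a] by simp
  ultimately have "promote_word a \<pi> = promote_word b \<pi>" if "\<pi> \<in> linext n lt" for \<pi>
    using promote_word_mutual_eq[OF c(1) d(1) _ _ that] word_matrix_eq_iff by metis
  then have "word_matrix a = word_matrix b"
    by (simp add: word_matrix_eq_iff)
  then show "x = y"
    using a(2) b(2) by simp
qed

end

theorem theorem6p9:
  fixes n :: nat and lt :: "nat \<Rightarrow> nat \<Rightarrow> bool"
  assumes "rooted_forest n lt"
    and "natural_labeling lt"
  shows "R_trivial (gen_monoid n lt) (mmul n lt)"
proof -
  interpret natural_forest n lt
    using assms by unfold_locales
  show ?thesis
    by (rule R_trivial_gen_monoid)
qed

end
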